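(* Let $w$ be well-ordering on an interval $I\subset\mathbb R$, $n\in\mathbb N$, and $x_1\le x_2\le\dots\le x_{2n}$ points of $I$. For every $A\subset\{1,\dots,2n\}$ with $|A|=n$, $c_n(x_{A_o})+c_n(x_{A_e})\le c_n(x_A)+c_n(x_{A^c}),$ where $A_o=\{1,3,\dots,2n-1\}$, $A_e=\{2,4,\dots,2n\}$, $A^c=\{1,\dots,2n\}\setminus A$. Moreover, if $w$ is strictly well-ordering and $c_n(x_A)+c_n(x_{A^c})<\infty$, then $c_n(x_A)+c_n(x_{A^c})=\min\{c_n(x_B)+c_n(x_{B^c}):B\subset\{1,\dots,2n\},|B|=n\}$ if and only if $\sum_{k\in A}\delta_{x_k}=\sum_{k=1}^n\delta_{x_{2k}}$ or $\sum_{k\in A}\delta_{x_k}=\sum_{k=1}^n\delta_{x_{2k-1}}$.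
   Context: $c_n(y_1,\dots,y_n)=\sum_{i\ne j}w(y_i,y_j)$ (ordered pairs). For $B=\{b_1<\dots<b_n\}$, $x_B=(x_{b_1},\dots,x_{b_n})$. Well-ordering: $w:I\times I\to\mathbb R\cup\{+\infty\}$ continuous symmetric with, for all $y_1\le y_2\le y_3\le y_4$ in $I$, $w(y_1,y_3)+w(y_2,y_4)=\min_\sigma[w(y_{\sigma(1)},y_{\sigma(2)})+w(y_{\sigma(3)},y_{\sigma(4)})]$ over permutations $\sigma$ of $\{1,2,3,4\}$. Strictly well-ordering: additionally, equality with a given $\sigma$ holds only if the sum is $\infty$ or $\delta_{y_1}+\delta_{y_3}$ equals $\delta_{y_{\sigma(1)}}+\delta_{y_{\sigma(2)}}$ or $\delta_{y_{\sigma(3)}}+\delta_{y_{\sigma(4)}}$. *)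

theory Defs
  imports "HOL-Analysis.Analysis" "HOL-Library.Multiset" "HOL-Library.Extended_Real"
begin

text \<open>Values in R \<union> {+\<infinity>} are modelled in ereal, with -\<infinity> excluded.\<close>

definition well_ordering :: "real set \<Rightarrow> (real \<Rightarrow> real \<Rightarrow> ereal) \<Rightarrow> bool" where
  "well_ordering I w \<longleftrightarrow>
     (\<forall>a\<in>I. \<forall>b\<in>I. w a b \<noteq> -\<infinity>) \<and>
     continuous_on (I \<times> I) (\<lambda>p. w (fst p) (snd p)) \<and>
     (\<forall>a\<in>I. \<forall>b\<in>I. w a b = w b a) \<and>
     (\<forall>y::nat \<Rightarrow> real. (\<forall>k\<in>{1..4}. y k \<in> I) \<and> y 1 \<le> y 2 \<and> y 2 \<le> y 3 \<and> y 3 \<le> y 4 \<longrightarrow>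
        w (y 1) (y 3) + w (y 2) (y 4) =
        Min ((\<lambda>\<sigma>. w (y (\<sigma> 1)) (y (\<sigma> 2)) + w (y (\<sigma> 3)) (y (\<sigma> 4))) ` {\<sigma>. \<sigma> permutes {1..4::nat}}))"

definition strictly_well_ordering :: "real set \<Rightarrow> (real \<Rightarrow> real \<Rightarrow> ereal) \<Rightarrow> bool" where
  "strictly_well_ordering I w \<longleftrightarrow> well_ordering I w \<and>
     (\<forall>y::nat \<Rightarrow> real. \<forall>\<sigma>. (\<forall>k\<in>{1..4}. y k \<in> I) \<and> y 1 \<le> y 2 \<and> y 2 \<le> y 3 \<and> y 3 \<le> y 4
        \<and> \<sigma> permutes {1..4::nat}
        \<and> w (y 1) (y 3) + w (y 2) (y 4) = w (y (\<sigma> 1)) (y (\<sigma> 2)) + w (y (\<sigma> 3)) (y (\<sigma> 4)) \<longrightarrow>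
        w (y 1) (y 3) + w (y 2) (y 4) = \<infinity> \<or>
        {#y 1, y 3#} = {#y (\<sigma> 1), y (\<sigma> 2)#} \<or>
        {#y 1, y 3#} = {#y (\<sigma> 3), y (\<sigma> 4)#})"

definition cn :: "(real \<Rightarrow> real \<Rightarrow> ereal) \<Rightarrow> real list \<Rightarrow> ereal" where
  "cn w ys = (\<Sum>i<length ys. \<Sum>j<length ys. if i \<noteq> j then w (ys ! i) (ys ! j) else 0)"

definition xsub :: "(nat \<Rightarrow> real) \<Rightarrow> nat set \<Rightarrow> real list" where
  "xsub x B = map x (sorted_list_of_set B)"

end

theory Submission
  imports Defs
begin

text \<open>
  Write \<open>D\<close> for the symmetric difference of a competitor \<open>A\<close> with the set \<open>O\<close> of odd
  indices. The lattice path that goes up at the odd and down at the even elements of \<open>D\<close>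
  returns to its start, and at an extremum of it (or of the path of the complement of \<open>D\<close>)
  there are two consecutive indices \<open>k, k + 1\<close> on which \<open>A\<close> (or its complement) agrees
  with \<open>O\<close>. Removing them splits both costs into a cost on \<open>2n - 2\<close> points, handled by
  induction, plus the interaction of \<open>x k\<close> and \<open>x (k + 1)\<close> with the remaining points.
  Read cyclically starting after \<open>k + 1\<close>, the path is a ballot sequence, so the odd and
  even elements of \<open>D\<close> can be matched in pairs whose order is one of those in which the
  four-point condition compares the interaction terms; summing over the pairs gives the
  inequality. For strictly well-ordering \<open>w\<close>, equality forces every matched pair to carry
  equal values unless \<open>x k = x (k + 1)\<close>, and in that case it is passed on by the induction.
\<close>

section \<open>Costs of a splitting\<close>

definition pair_cost :: "(real \<Rightarrow> real \<Rightarrow> ereal) \<Rightarrow> real multiset \<Rightarrow> ereal" where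
  "pair_cost w M = (\<Sum>a\<in>#M. \<Sum>b\<in>#M - {#a#}. w a b)"

lemma pair_cost_empty [simp]: "pair_cost w {#} = 0"
  by (simp add: pair_cost_def)

lemma pair_cost_add_mset:
  "pair_cost w (add_mset y M) = pair_cost w M + (\<Sum>b\<in>#M. w y b) + (\<Sum>b\<in>#M. w b y)"
proof -
  have "(\<Sum>a\<in>#M. \<Sum>b\<in>#add_mset y M - {#a#}. w a b) = (\<Sum>a\<in>#M. w a y + (\<Sum>b\<in>#M - {#a#}. w a b))"
  proof (rule arg_cong[where f = sum_mset], rule image_mset_cong)
    fix a assume "a \<in># M"
    then obtain M' where "M = add_mset a M'" by (metis multi_member_split)
    then show "(\<Sum>b\<in>#add_mset y M - {#a#}. w a b) = w a y + (\<Sum>b\<in>#M - {#a#}. w a b)"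
      by (simp add: add_mset_commute)
  qed
  then show ?thesis
    by (simp add: pair_cost_def sum_mset.distrib ac_simps)
qed

lemma cn_eq_pair_cost: "cn w ys = pair_cost w (mset ys)"
proof (induction ys)
  case Nil
  then show ?case by (simp add: cn_def)
next
  case (Cons y ys)
  have "cn w (y # ys) = cn w ys + (\<Sum>j<length ys. w y (ys ! j)) + (\<Sum>i<length ys. w (ys ! i) y)"
    unfolding cn_def by (simp only: length_Cons sum.lessThan_Suc_shift nth_Cons_Suc nth_Cons_0)
      (simp add: sum.distrib ac_simps)
  also have "\<dots> = cn w ys + (\<Sum>b\<in>#mset ys. w y b) + (\<Sum>b\<in>#mset ys. w b y)"
    by (simp add: sum_list_sum_nth atLeast0LessThan sum_mset_sum_list flip: mset_map)
  finally show ?case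
    using Cons by (simp add: pair_cost_add_mset)
qed

lemma cn_xsub: "cn w (xsub x A) = pair_cost w (image_mset x (mset_set A))"
  by (simp add: xsub_def cn_eq_pair_cost)
     (metis mset_map mset_sorted_list_of_multiset sorted_list_of_mset_set)

definition split_cost :: "(real \<Rightarrow> real \<Rightarrow> ereal) \<Rightarrow> (nat \<Rightarrow> real) \<Rightarrow> nat set \<Rightarrow> nat set \<Rightarrow> ereal" where
  "split_cost w x S A =
     pair_cost w (image_mset x (mset_set A)) + pair_cost w (image_mset x (mset_set (S - A)))"

lemma image_mset_mset_set_Diff:
  "finite S \<Longrightarrow> A \<subseteq> S \<Longrightarrow>
    image_mset x (mset_set (S - A)) = image_mset x (mset_set S) - image_mset x (mset_set A)"
  by (simp add: mset_set_Diff image_mset_Diff subset_imp_msubset_mset_set)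

lemma image_mset_mset_set_Int_Diff:
  "finite B \<Longrightarrow> image_mset x (mset_set B) = image_mset x (mset_set (B \<inter> C)) + image_mset x (mset_set (B - C))"
  by (metis Int_Diff_Un Int_Diff_disjoint finite_Diff finite_Int image_mset_union mset_set_Union)

lemma image_mset_mset_set_eq_if_Diff_eq:
  assumes "finite A" "finite B" "image_mset x (mset_set (A - B)) = image_mset x (mset_set (B - A))"
  shows "image_mset x (mset_set A) = image_mset x (mset_set B)"
  using assms image_mset_mset_set_Int_Diff[of A x B] image_mset_mset_set_Int_Diff[of B x A]
  by (simp add: Int_commute)

lemma image_mset_mset_set_bij_betw:
  assumes "bij_betw \<phi> F L" "\<And>v. v \<in> F \<Longrightarrow> x (\<phi> v) = x v"
  shows "image_mset x (mset_set L) = image_mset x (mset_set F)"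
proof -
  have "image_mset x (mset_set L) = image_mset (x \<circ> \<phi>) (mset_set F)"
    using assms(1) by (auto simp: bij_betw_def image_mset_mset_set simp flip: multiset.map_comp)
  also have "\<dots> = image_mset x (mset_set F)"
    using assms(2) by (cases "finite F") (auto intro: image_mset_cong)
  finally show ?thesis .
qed

lemma split_cost_Diff: "finite S \<Longrightarrow> A \<subseteq> S \<Longrightarrow> split_cost w x S (S - A) = split_cost w x S A"
  by (simp add: split_cost_def double_diff add.commute)

lemma split_cost_cong_mset:
  assumes "finite S" "A \<subseteq> S" "B \<subseteq> S"
    and "image_mset x (mset_set A) = image_mset x (mset_set B)"
  shows "split_cost w x S A = split_cost w x S B"
  using assms by (simp add: split_cost_def image_mset_mset_set_Diff)

lemma split_cost_image:
  assumes "inj_on r T" "B \<subseteq> T"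
  shows "split_cost w x (r ` T) (r ` B) = split_cost w (x \<circ> r) T B"
proof -
  have "r ` T - r ` B = r ` (T - B)"
    using assms by (auto simp: inj_on_def)
  moreover have "image_mset x (mset_set (r ` C)) = image_mset (x \<circ> r) (mset_set C)" if "C \<subseteq> T" for C
    using inj_on_subset[OF assms(1) that] by (simp add: image_mset_mset_set flip: multiset.map_comp)
  ultimately show ?thesis
    using assms(2) by (simp add: split_cost_def)
qed

definition join_cost ::
    "(real \<Rightarrow> real \<Rightarrow> ereal) \<Rightarrow> (nat \<Rightarrow> real) \<Rightarrow> nat \<Rightarrow> nat set \<Rightarrow> nat \<Rightarrow> nat set \<Rightarrow> ereal" where
  "join_cost w x a U b V = (\<Sum>u\<in>U. w (x a) (x u)) + (\<Sum>v\<in>V. w (x b) (x v))"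

lemma join_cost_regroup:
  assumes "finite S" "B \<subseteq> S" "C \<subseteq> S"
  shows "join_cost w x a B b (S - B) =
    join_cost w x a (B \<inter> C) b (S - (B \<union> C)) + join_cost w x a (B - C) b (C - B)"
proof -
  have "finite B" using assms finite_subset by blast
  then have a: "(\<Sum>u\<in>B. w (x a) (x u)) = (\<Sum>u\<in>B \<inter> C. w (x a) (x u)) + (\<Sum>u\<in>B - C. w (x a) (x u))"
    by (rule sum.Int_Diff)
  have split: "S - B = (S - (B \<union> C)) \<union> (C - B)"
    using assms by auto
  have b: "(\<Sum>v\<in>S - B. w (x b) (x v)) = (\<Sum>v\<in>S - (B \<union> C). w (x b) (x v)) + (\<Sum>v\<in>C - B. w (x b) (x v))"
    unfolding split by (rule sum.union_disjoint) (use assms in \<open>auto intro: finite_subset\<close>)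
  show ?thesis
    unfolding join_cost_def a b by (simp add: ac_simps)
qed

lemma pair_cost_insert:
  assumes "finite B" "a \<notin> B" and sym: "\<And>j. j \<in> B \<Longrightarrow> w (x j) (x a) = w (x a) (x j)"
  shows "pair_cost w (image_mset x (mset_set (insert a B))) =
    pair_cost w (image_mset x (mset_set B)) + ((\<Sum>j\<in>B. w (x a) (x j)) + (\<Sum>j\<in>B. w (x a) (x j)))"
proof -
  have "(\<Sum>j\<in>B. w (x j) (x a)) = (\<Sum>j\<in>B. w (x a) (x j))"
    using sym by (rule sum.cong[OF refl])
  with assms(1,2) show ?thesis
    by (simp add: pair_cost_add_mset sum_unfold_sum_mset multiset.map_comp comp_def ac_simps)
qed

lemma split_cost_remove_pair:
  assumes sym: "\<And>i j. i \<in> S \<Longrightarrow> j \<in> S \<Longrightarrow> w (x i) (x j) = w (x j) (x i)"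
    and "finite S" "A \<subseteq> S" "a \<in> A" "b \<in> S - A"
  defines "c \<equiv> join_cost w x a (A - {a}) b (S - A - {b})"
  shows "split_cost w x S A = split_cost w x (S - {a, b}) (A - {a}) + (c + c)"
proof -
  have A: "A = insert a (A - {a})" and SA: "S - A = insert b (S - A - {b})"
    and SA': "S - {a, b} - (A - {a}) = S - A - {b}"
    using assms by auto
  have "finite A" using assms finite_subset by blast
  then show ?thesis
    unfolding split_cost_def c_def join_cost_def SA'
    by (subst A, subst SA, subst (1 2) pair_cost_insert) (use assms in \<open>auto simp: ac_simps\<close>)
qed

section \<open>Sums in the extended reals\<close>

lemma sum_not_MInfty: "(\<And>i. i \<in> A \<Longrightarrow> f i \<noteq> -\<infinity>) \<Longrightarrow> sum f A \<noteq> (-\<infinity> :: ereal)"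
  by (induction A rule: infinite_finite_induct) auto

lemma ereal_add_le_add_eqD:
  fixes a b c d :: ereal
  assumes "a \<le> b" "c \<le> d" "a + c = b + d" "b + d \<noteq> \<infinity>" "a \<noteq> -\<infinity>" "c \<noteq> -\<infinity>"
  shows "a = b \<and> c = d"
  using assms by (cases a; cases b; cases c; cases d) auto

lemma ereal_doubled_cancel:
  fixes a b r y y' :: ereal
  assumes le: "a \<le> b" "y \<le> y'" and eq: "a + ((r + y) + (r + y)) = b + ((r + y') + (r + y'))"
    and finite: "b + ((r + y') + (r + y')) \<noteq> \<infinity>" and not_MInfty: "a \<noteq> -\<infinity>" "r \<noteq> -\<infinity>" "y \<noteq> -\<infinity>"
  shows "a = b" "y = y'" "y' \<noteq> \<infinity>"
proof -
  have "r + y \<le> r + y'"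
    by (rule add_mono[OF order_refl le(2)])
  from this this have "(r + y) + (r + y) \<le> (r + y') + (r + y')"
    by (rule add_mono)
  moreover have "(r + y) + (r + y) \<noteq> -\<infinity>" "r + y \<noteq> -\<infinity>"
    using not_MInfty by simp_all
  ultimately have "a = b" and doubled: "(r + y) + (r + y) = (r + y') + (r + y')"
    using ereal_add_le_add_eqD[OF le(1) _ eq finite not_MInfty(1)] by blast+
  moreover have "r \<noteq> \<infinity>" "y' \<noteq> \<infinity>" "(r + y') + (r + y') \<noteq> \<infinity>"
    using finite by simp_all
  ultimately show "a = b" "y = y'" "y' \<noteq> \<infinity>"
    using ereal_add_le_add_eqD[OF \<open>r + y \<le> r + y'\<close> \<open>r + y \<le> r + y'\<close> doubled] \<open>r + y \<noteq> -\<infinity>\<close> not_MInfty(2)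
    by (simp_all add: ereal_add_cancel_left)
qed

lemma ereal_sum_strict_mono:
  fixes f g :: "'a \<Rightarrow> ereal"
  assumes "finite A" "i \<in> A" "f i < g i" and le: "\<And>j. j \<in> A \<Longrightarrow> f j \<le> g j"
    and "\<And>j. j \<in> A \<Longrightarrow> f j \<noteq> -\<infinity>" and "sum g A \<noteq> \<infinity>"
  shows "sum f A < sum g A"
proof -
  have finite: "\<bar>f j\<bar> \<noteq> \<infinity>" "\<bar>g j\<bar> \<noteq> \<infinity>" if "j \<in> A" for j
  proof -
    have "g j \<noteq> \<infinity>" using assms(1,6) that by (auto simp: sum_Pinfty)
    then show "\<bar>f j\<bar> \<noteq> \<infinity>" "\<bar>g j\<bar> \<noteq> \<infinity>"
      using le[OF that] assms(5)[OF that] by (cases "f j"; cases "g j"; simp)+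
  qed
  have "sum f A = (\<Sum>j\<in>A. ereal (real_of_ereal (f j)))" "sum g A = (\<Sum>j\<in>A. ereal (real_of_ereal (g j)))"
    by (intro sum.cong refl; simp add: finite ereal_real')+
  moreover have "(\<Sum>j\<in>A. real_of_ereal (f j)) < (\<Sum>j\<in>A. real_of_ereal (g j))"
  proof (rule sum_strict_mono_strong[OF assms(1,2)])
    show "real_of_ereal (f i) < real_of_ereal (g i)"
      using assms(3) finite[OF assms(2)] by (cases "f i"; cases "g i") auto
    show "real_of_ereal (f j) \<le> real_of_ereal (g j)" if "j \<in> A" for j
      using le[OF that] finite[OF that] by (cases "f j"; cases "g j") auto
  qed
  ultimately show ?thesis by simp
qed

section \<open>The four-point condition\<close>

lemma well_ordering_symmetric: "well_ordering I w \<Longrightarrow> a \<in> I \<Longrightarrow> b \<in> I \<Longrightarrow> w a b = w b a"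
  unfolding well_ordering_def by blast

lemma well_ordering_not_MInfty: "well_ordering I w \<Longrightarrow> a \<in> I \<Longrightarrow> b \<in> I \<Longrightarrow> w a b \<noteq> -\<infinity>"
  unfolding well_ordering_def by blast

lemma transpose_2_4_permutes: "Transposition.transpose (2::nat) 4 permutes {1..4}"
  by (rule permutes_swap_id) auto

lemma well_ordering_four_points:
  assumes wo: "well_ordering I w" and I: "a \<in> I" "b \<in> I" "c \<in> I" "d \<in> I"
    and le: "a \<le> b" "b \<le> c" "c \<le> d"
  shows "w a c + w b d \<le> w a b + w c d" and "w a c + w b d \<le> w a d + w b c"
proof -
  define y :: "nat \<Rightarrow> real" where "y k = (if k = 1 then a else if k = 2 then b else if k = 3 then c else d)" for k
  define f where "f \<sigma> = w (y (\<sigma> 1)) (y (\<sigma> 2)) + w (y (\<sigma> 3)) (y (\<sigma> 4))" for \<sigma> :: "nat \<Rightarrow> nat"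
  have "w a c + w b d = Min (f ` {\<sigma>. \<sigma> permutes {1..4}})"
    using wo I le unfolding well_ordering_def f_def
    by (elim conjE allE[of _ y]) (auto simp: y_def)
  moreover have "Min (f ` {\<sigma>. \<sigma> permutes {1..4}}) \<le> f \<sigma>" if "\<sigma> permutes {1..4}" for \<sigma>
    using that by (intro Min_le finite_imageI) (auto simp: finite_permutations)
  ultimately have "w a c + w b d \<le> f id" "w a c + w b d \<le> f (Transposition.transpose 2 4)"
    using permutes_id transpose_2_4_permutes by fastforce+
  then show "w a c + w b d \<le> w a b + w c d" "w a c + w b d \<le> w a d + w b c"
    using well_ordering_symmetric[OF wo I(3,2)] by (simp_all add: f_def y_def Transposition.transpose_def)
qed

lemma strictly_well_ordering_four_points:
  assumes swo: "strictly_well_ordering I w" and I: "a \<in> I" "b \<in> I" "c \<in> I" "d \<in> I"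
    and le: "a \<le> b" "b \<le> c" "c \<le> d"
  shows "w a c + w b d = w a b + w c d \<Longrightarrow> w a c + w b d = \<infinity> \<or> b = c \<or> a = d"
    and "w a c + w b d = w a d + w b c \<Longrightarrow> w a c + w b d = \<infinity> \<or> a = b \<or> c = d"
proof -
  define y :: "nat \<Rightarrow> real" where "y k = (if k = 1 then a else if k = 2 then b else if k = 3 then c else d)" for k
  have wo: "well_ordering I w" using swo unfolding strictly_well_ordering_def by blast
  have strict: "w a c + w b d = \<infinity> \<or> {#a, c#} = {#y (\<sigma> 1), y (\<sigma> 2)#} \<or> {#a, c#} = {#y (\<sigma> 3), y (\<sigma> 4)#}"
    if "\<sigma> permutes {1..4}" "w a c + w b d = w (y (\<sigma> 1)) (y (\<sigma> 2)) + w (y (\<sigma> 3)) (y (\<sigma> 4))" for \<sigma>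
    using swo that I le unfolding strictly_well_ordering_def
    by (elim conjE allE[of _ y] allE[of _ \<sigma>]) (auto simp: y_def)
  show "w a c + w b d = \<infinity> \<or> b = c \<or> a = d" if "w a c + w b d = w a b + w c d"
    using strict[OF permutes_id] that by (auto simp: y_def add_eq_conv_ex)
  show "w a c + w b d = \<infinity> \<or> a = b \<or> c = d" if "w a c + w b d = w a d + w b c"
    using strict[OF transpose_2_4_permutes] that well_ordering_symmetric[OF wo I(3,2)]
    by (auto simp: y_def Transposition.transpose_def add_eq_conv_ex)
qed

text \<open>The hypothesis \<open>config\<close> lists the relative orders of \<open>u, v\<close> and \<open>p \<le> q\<close> in which
  the matching \<open>(p, u), (q, v)\<close> is the cheaper one.\<close>

lemma well_ordering_exchange:
  assumes wo: "well_ordering I w" and I: "p \<in> I" "q \<in> I" "u \<in> I" "v \<in> I" and "p \<le> q"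
    and config: "q \<le> u \<and> u \<le> v \<or> v \<le> p \<and> q \<le> u \<or> u \<le> v \<and> v \<le> p"
  shows "w p u + w q v \<le> w p v + w q u"
  using config
proof (elim disjE conjE)
  assume "q \<le> u" "u \<le> v"
  then show ?thesis using well_ordering_four_points(2)[OF wo I] \<open>p \<le> q\<close> by simp
next
  assume "v \<le> p" "q \<le> u"
  then show ?thesis
    using well_ordering_four_points(1)[OF wo I(4,1,2,3)] \<open>p \<le> q\<close>
      well_ordering_symmetric[OF wo I(2,4)] well_ordering_symmetric[OF wo I(1,4)]
    by (simp add: ac_simps)
next
  assume "u \<le> v" "v \<le> p"
  then show ?thesis
    using well_ordering_four_points(2)[OF wo I(3,4,1,2)] \<open>p \<le> q\<close>
      well_ordering_symmetric[OF wo I(1,3)] well_ordering_symmetric[OF wo I(2,4)]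
      well_ordering_symmetric[OF wo I(1,4)] well_ordering_symmetric[OF wo I(2,3)]
    by (simp add: ac_simps)
qed

lemma strictly_well_ordering_exchange:
  assumes swo: "strictly_well_ordering I w" and I: "p \<in> I" "q \<in> I" "u \<in> I" "v \<in> I" and "p \<le> q"
    and config: "q \<le> u \<and> u \<le> v \<or> v \<le> p \<and> q \<le> u \<or> u \<le> v \<and> v \<le> p"
    and "p \<noteq> q" "u \<noteq> v" and eq: "w p u + w q v = w p v + w q u"
  shows "w p v + w q u = \<infinity>"
proof -
  have wo: "well_ordering I w" using swo unfolding strictly_well_ordering_def by blast
  note sym = well_ordering_symmetric[OF wo]
  from config show ?thesis
  proof (elim disjE conjE)
    assume "q \<le> u" "u \<le> v"
    then show ?thesis
      using strictly_well_ordering_four_points(2)[OF swo I] assms by auto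
  next
    assume "v \<le> p" "q \<le> u"
    then show ?thesis
      using strictly_well_ordering_four_points(1)[OF swo I(4,1,2,3)] assms
        sym[OF I(2,4)] sym[OF I(1,4)] by (auto simp: ac_simps)
  next
    assume "u \<le> v" "v \<le> p"
    then show ?thesis
      using strictly_well_ordering_four_points(2)[OF swo I(3,4,1,2)] assms
        sym[OF I(1,3)] sym[OF I(2,4)] sym[OF I(1,4)] sym[OF I(2,3)] by (auto simp: ac_simps)
  qed
qed

lemma join_cost_not_MInfty:
  assumes "well_ordering I w" "x a \<in> I" "x b \<in> I" "\<forall>i\<in>U \<union> V. x i \<in> I"
  shows "join_cost w x a U b V \<noteq> -\<infinity>"
proof -
  have "(\<Sum>u\<in>U. w (x a) (x u)) \<noteq> -\<infinity>" "(\<Sum>v\<in>V. w (x b) (x v)) \<noteq> -\<infinity>"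
    using assms well_ordering_not_MInfty[OF assms(1)] by (auto intro!: sum_not_MInfty)
  then show ?thesis by (simp add: join_cost_def)
qed

lemma pair_cost_not_MInfty:
  assumes "well_ordering I w" "set_mset M \<subseteq> I"
  shows "pair_cost w M \<noteq> -\<infinity>"
  using assms(2)
proof (induction M)
  case (add y M)
  have "w y b \<noteq> -\<infinity>" "w b y \<noteq> -\<infinity>" if "b \<in># M" for b
    using add.prems that well_ordering_not_MInfty[OF assms(1)] by auto
  then have "(\<Sum>b\<in>#M. w y b) \<noteq> -\<infinity>" "(\<Sum>b\<in>#M. w b y) \<noteq> -\<infinity>"
    by (induction M) auto
  with add show ?case
    by (simp add: pair_cost_add_mset)
qed simp

lemma split_cost_not_MInfty:
  assumes "well_ordering I w" "finite S" "\<forall>i\<in>S. x i \<in> I" "A \<subseteq> S"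
  shows "split_cost w x S A \<noteq> -\<infinity>"
proof -
  have "pair_cost w (image_mset x (mset_set B)) \<noteq> -\<infinity>" if "B \<subseteq> S" for B
  proof (rule pair_cost_not_MInfty[OF assms(1)])
    have "finite B" using that assms(2) by (rule finite_subset)
    then show "set_mset (image_mset x (mset_set B)) \<subseteq> I"
      using that assms(3) by auto
  qed
  then show ?thesis
    using assms(4) by (simp add: split_cost_def)
qed

section \<open>Matching by a ballot argument\<close>

lemma ballot_matching:
  fixes \<kappa> :: "'a \<Rightarrow> 'b::linorder"
  assumes "finite F" "finite L" "inj_on \<kappa> (L \<union> F)" "L \<inter> F = {}"
    and "\<And>c. card {v \<in> F. \<kappa> v \<le> c} \<le> card {u \<in> L. \<kappa> u \<le> c}"
  shows "\<exists>\<phi>. inj_on \<phi> F \<and> \<phi> ` F \<subseteq> L \<and> (\<forall>v\<in>F. \<kappa> (\<phi> v) < \<kappa> v)"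
  using assms
proof (induction F arbitrary: L rule: finite_remove_induct)
  case empty
  then show ?case by auto
next
  case (remove F)
  \<comment> \<open>Match the first element of \<open>F\<close> with any earlier element of \<open>L\<close>; the ballot
    condition survives the removal of both.\<close>
  obtain v0 where v0: "v0 \<in> F" "\<And>v. v \<in> F \<Longrightarrow> \<kappa> v0 \<le> \<kappa> v"
    using Min_in[of "\<kappa> ` F"] Min_le[of "\<kappa> ` F"] \<open>finite F\<close> \<open>F \<noteq> {}\<close> by fastforce
  have "0 < card {v \<in> F. \<kappa> v \<le> \<kappa> v0}"
    using v0 \<open>finite F\<close> by (auto simp: card_gt_0_iff)
  also have "\<dots> \<le> card {u \<in> L. \<kappa> u \<le> \<kappa> v0}" by (rule remove.prems(4))
  finally obtain u0 where u0: "u0 \<in> L" "\<kappa> u0 \<le> \<kappa> v0"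
    by (metis (no_types, lifting) card.empty empty_Collect_eq less_irrefl)
  have "\<kappa> u0 \<noteq> \<kappa> v0"
    using u0 v0 remove.prems(2,3) by (auto dest: inj_onD)
  with u0 have u0v0: "\<kappa> u0 < \<kappa> v0" by simp
  have ballot: "card {v \<in> F - {v0}. \<kappa> v \<le> c} \<le> card {u \<in> L - {u0}. \<kappa> u \<le> c}" for c
  proof (cases "\<kappa> v0 \<le> c")
    case True
    then have "{v \<in> F - {v0}. \<kappa> v \<le> c} = {v \<in> F. \<kappa> v \<le> c} - {v0}"
      "{u \<in> L - {u0}. \<kappa> u \<le> c} = {u \<in> L. \<kappa> u \<le> c} - {u0}"
      by auto
    then show ?thesis
      using remove.prems(4)[of c] True u0 u0v0 v0 \<open>finite F\<close> \<open>finite L\<close> by simp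
  next
    case False
    then have "{v \<in> F - {v0}. \<kappa> v \<le> c} = {}"
      using v0 by force
    then show ?thesis by (metis card.empty zero_le)
  qed
  have smaller: "finite (L - {u0})" "inj_on \<kappa> ((L - {u0}) \<union> (F - {v0}))" "(L - {u0}) \<inter> (F - {v0}) = {}"
    using remove.prems(1,3) inj_on_subset[OF remove.prems(2), of "(L - {u0}) \<union> (F - {v0})"] by auto
  obtain \<phi> where \<phi>: "inj_on \<phi> (F - {v0})" "\<phi> ` (F - {v0}) \<subseteq> L - {u0}"
    "\<forall>v\<in>F - {v0}. \<kappa> (\<phi> v) < \<kappa> v"
    using remove.IH[OF v0(1) smaller ballot] by blast
  show ?case
  proof (intro exI conjI)
    show "inj_on (\<phi>(v0 := u0)) F"
    proof (rule inj_onI)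
      fix a b assume "a \<in> F" "b \<in> F" "(\<phi>(v0 := u0)) a = (\<phi>(v0 := u0)) b"
      then show "a = b"
        using \<phi>(1,2) by (cases "a = v0"; cases "b = v0") (auto simp: image_subset_iff dest: inj_onD)
    qed
    show "(\<phi>(v0 := u0)) ` F \<subseteq> L"
      using \<phi>(2) u0 by auto
    show "\<forall>v\<in>F. \<kappa> ((\<phi>(v0 := u0)) v) < \<kappa> v"
      using \<phi>(3) u0v0 by auto
  qed
qed

lemma matched_exchange:
  fixes f g :: "'a \<Rightarrow> ereal"
  assumes bij: "bij_betw \<phi> F L" and "finite F"
    and le: "\<forall>v\<in>F. f (\<phi> v) + g v \<le> f v + g (\<phi> v)"
    and not_MInfty: "\<forall>i\<in>L \<union> F. f i \<noteq> -\<infinity> \<and> g i \<noteq> -\<infinity>"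
  shows "sum f L + sum g F \<le> sum f F + sum g L"
    and "sum f L + sum g F = sum f F + sum g L \<Longrightarrow> sum f F + sum g L \<noteq> \<infinity> \<Longrightarrow> v \<in> F \<Longrightarrow>
      f (\<phi> v) + g v = f v + g (\<phi> v) \<and> f v + g (\<phi> v) \<noteq> \<infinity>"
proof -
  have sums: "sum f L + sum g F = (\<Sum>v\<in>F. f (\<phi> v) + g v)" "sum f F + sum g L = (\<Sum>v\<in>F. f v + g (\<phi> v))"
    using sum.reindex_bij_betw[OF bij, of f] sum.reindex_bij_betw[OF bij, of g] by (simp_all add: sum.distrib)
  then show "sum f L + sum g F \<le> sum f F + sum g L"
    using le by (simp add: sum_mono)
  assume eq: "sum f L + sum g F = sum f F + sum g L" and finite: "sum f F + sum g L \<noteq> \<infinity>" and "v \<in> F"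
  then have "f v + g (\<phi> v) \<noteq> \<infinity>"
    using \<open>finite F\<close> unfolding sums by (auto simp: sum_Pinfty)
  moreover have "f (\<phi> v) + g v = f v + g (\<phi> v)"
  proof (rule ccontr)
    assume "f (\<phi> v) + g v \<noteq> f v + g (\<phi> v)"
    with le \<open>v \<in> F\<close> have "f (\<phi> v) + g v < f v + g (\<phi> v)" by (simp add: order_less_le)
    moreover have "f (\<phi> u) + g u \<noteq> -\<infinity>" if "u \<in> F" for u
      using not_MInfty that bij_betw_apply[OF bij that] by simp
    ultimately have "sum f L + sum g F < sum f F + sum g L"
      unfolding sums using le finite \<open>v \<in> F\<close> \<open>finite F\<close> by (intro ereal_sum_strict_mono) (auto simp: sums)
    with eq show False by simp
  qed
  ultimately show "f (\<phi> v) + g v = f v + g (\<phi> v) \<and> f v + g (\<phi> v) \<noteq> \<infinity>" by blast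
qed

section \<open>The lattice path of a set of indices\<close>

definition parity_sign :: "nat \<Rightarrow> int" where
  "parity_sign i = (if odd i then 1 else -1)"

definition odd_excess :: "nat set \<Rightarrow> nat \<Rightarrow> int" where
  "odd_excess Y j = (\<Sum>i\<in>{i\<in>Y. i < j}. parity_sign i)"

lemma sum_parity_sign:
  "finite Z \<Longrightarrow> (\<Sum>i\<in>Z. parity_sign i) = int (card {i\<in>Z. odd i}) - int (card {i\<in>Z. even i})"
  using sum.Int_Diff[of Z parity_sign "Collect odd"]
  by (simp add: parity_sign_def Int_def set_diff_eq conj_commute)

lemma odd_excess_0 [simp]: "odd_excess Y 0 = 0"
  by (simp add: odd_excess_def)

lemma odd_excess_Suc:
  "odd_excess Y (Suc j) = odd_excess Y j + (if j \<in> Y then parity_sign j else 0)"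
proof -
  have "{i\<in>Y. i < Suc j} = (if j \<in> Y then insert j {i\<in>Y. i < j} else {i\<in>Y. i < j})"
    by (auto simp: less_Suc_eq)
  then show ?thesis by (simp add: odd_excess_def)
qed

lemma finite_Collect_mem_less_nat: "finite {i\<in>Y. i < (b::nat)}"
  by (rule finite_subset[of _ "{..<b}"]) auto

lemma odd_excess_diff:
  assumes "a \<le> b"
  shows "(\<Sum>i\<in>{i\<in>Y. a \<le> i \<and> i < b}. parity_sign i) = odd_excess Y b - odd_excess Y a"
proof -
  have split: "{i\<in>Y. i < b} = {i\<in>Y. i < a} \<union> {i\<in>Y. a \<le> i \<and> i < b}"
    using assms by auto
  have finite: "finite {i\<in>Y. a \<le> i \<and> i < b}"
    by (rule finite_subset[of _ "{..<b}"]) auto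
  have "odd_excess Y b = (\<Sum>i\<in>{i\<in>Y. i < a} \<union> {i\<in>Y. a \<le> i \<and> i < b}. parity_sign i)"
    unfolding odd_excess_def split ..
  also have "\<dots> = odd_excess Y a + (\<Sum>i\<in>{i\<in>Y. a \<le> i \<and> i < b}. parity_sign i)"
    unfolding odd_excess_def by (rule sum.union_disjoint) (auto simp: finite_Collect_mem_less_nat finite)
  finally show ?thesis by simp
qed

lemma odd_excess_Diff:
  "finite S \<Longrightarrow> Y \<subseteq> S \<Longrightarrow> odd_excess (S - Y) j = odd_excess S j - odd_excess Y j"
  unfolding odd_excess_def
  by (subst sum.subset_diff[of "{i\<in>Y. i < j}" "{i\<in>S. i < j}"]) (auto intro: sum.cong)

lemma odd_excess_interval:
  "odd_excess {1..2*N} j = (if even j \<and> 2 \<le> j \<and> j \<le> 2*N then 1 else 0)"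
proof (induction j)
  case (Suc j)
  have "odd j \<Longrightarrow> j \<le> 2*N \<Longrightarrow> Suc j \<le> 2*N" by presburger
  with Suc show ?case by (auto simp: odd_excess_Suc parity_sign_def)
qed simp

lemma odd_excess_total:
  "Y \<subseteq> {1..2*N} \<Longrightarrow> odd_excess Y (Suc (2*N)) = int (card {i\<in>Y. odd i}) - int (card {i\<in>Y. even i})"
proof -
  assume "Y \<subseteq> {1..2*N}"
  then have "{i\<in>Y. i < Suc (2*N)} = Y" by auto
  with \<open>Y \<subseteq> {1..2*N}\<close> show ?thesis
    by (simp add: odd_excess_def sum_parity_sign finite_subset)
qed

definition excess_extremal_at :: "nat \<Rightarrow> nat set \<Rightarrow> nat \<Rightarrow> bool" where
  "excess_extremal_at N Y k \<longleftrightarrow>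
     (if odd k then \<forall>j\<in>{1..Suc (2*N)}. odd_excess Y k \<le> odd_excess Y j
      else \<forall>j\<in>{1..Suc (2*N)}. odd_excess Y j \<le> odd_excess Y k)"

lemma odd_excess_complement:
  "Y \<subseteq> {1..2*N} \<Longrightarrow>
    odd_excess ({1..2*N} - Y) j = (if even j \<and> 2 \<le> j \<and> j \<le> 2*N then 1 else 0) - odd_excess Y j"
  using odd_excess_Diff[OF finite_atLeastAtMost, of Y 1 "2*N" j] odd_excess_interval[of N j] by simp

lemma block_at_interior_min:
  assumes Y: "Y \<subseteq> {1..2*N}" and j0: "j0 \<in> {2..2*N}"
    and min: "\<And>j. j \<in> {1..Suc (2*N)} \<Longrightarrow> odd_excess Y j0 \<le> odd_excess Y j"
  shows "\<exists>k\<in>{1..<2*N}. k \<notin> Y \<and> Suc k \<notin> Y \<and> excess_extremal_at N Y k \<or>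
                       k \<in> Y \<and> Suc k \<in> Y \<and> excess_extremal_at N ({1..2*N} - Y) k"
proof -
  define f where "f = odd_excess Y"
  define m where "m = f j0"
  have step: "f (Suc i) = f i + (if i \<in> Y then parity_sign i else 0)" for i
    unfolding f_def by (rule odd_excess_Suc)
  have ge: "m \<le> f j" if "j \<in> {1..Suc (2*N)}" for j
    using min[OF that] by (simp add: f_def m_def)
  \<comment> \<open>The path can only go up at odd and only down at even indices, so both steps next to an
    even minimiser are flat, and if there is none, both steps next to \<open>j0\<close> are taken.\<close>
  show ?thesis
  proof (cases "\<exists>j\<in>{2..2*N}. even j \<and> f j = m")
    case True
    then obtain j where j: "j \<in> {2..2*N}" "even j" "f j = m" by blast
    define k where "k = j - 1"
    have k: "odd k" "Suc k = j" "k \<in> {1..<2*N}"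
      using j by (auto simp: k_def)
    have "k \<notin> Y"
      using step[of k] ge[of k] j k by (auto simp: parity_sign_def)
    moreover have "Suc k \<notin> Y"
      using step[of j] ge[of "Suc j"] j k by (auto simp: parity_sign_def)
    moreover have "excess_extremal_at N Y k"
      using step[of k] \<open>k \<notin> Y\<close> ge j k by (simp add: excess_extremal_at_def f_def)
    ultimately show ?thesis using k by blast
  next
    case False
    have "odd j0" "f j0 = m"
      using False j0 by (auto simp: m_def)
    define k where "k = j0 - 1"
    have k: "even k" "Suc k = j0" "k \<in> {1..<2*N}" "k \<in> {2..2*N}"
      using j0 \<open>odd j0\<close> by (auto simp: k_def elim: oddE)
    have "f k \<noteq> m" using False k by blast
    then have "k \<in> Y" and fk: "f k = m + 1"
      using step[of k] ge[of k] k \<open>f j0 = m\<close> by (auto simp: parity_sign_def split: if_splits)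
    have "Suc j0 \<in> {2..2*N}" "even (Suc j0)"
      using j0 \<open>odd j0\<close> by (simp_all, presburger)
    then have "f (Suc j0) \<noteq> m" using False by blast
    then have "Suc k \<in> Y"
      using step[of j0] k \<open>odd j0\<close> \<open>f j0 = m\<close> by (auto simp: parity_sign_def split: if_splits)
    moreover have "excess_extremal_at N ({1..2*N} - Y) k"
    proof -
      have "odd_excess ({1..2*N} - Y) j \<le> - m" if "j \<in> {1..Suc (2*N)}" for j
        using ge[OF that] False that odd_excess_complement[OF Y, of j] by (force simp: f_def)
      then show ?thesis
        using k fk odd_excess_complement[OF Y, of k] by (simp add: excess_extremal_at_def f_def)
    qed
    ultimately show ?thesis using k \<open>k \<in> Y\<close> by blast
  qed
qed

lemma block_exists:
  assumes Y: "Y \<subseteq> {1..2*N}" "Y \<noteq> {}" and balanced: "odd_excess Y (Suc (2*N)) = 0"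
  shows "\<exists>k\<in>{1..<2*N}. k \<notin> Y \<and> Suc k \<notin> Y \<and> excess_extremal_at N Y k \<or>
                       k \<in> Y \<and> Suc k \<in> Y \<and> excess_extremal_at N ({1..2*N} - Y) k"
proof -
  let ?J = "{1..Suc (2*N)}"
  have minimizer: "\<exists>j\<in>?J. \<forall>j'\<in>?J. g j \<le> g j'" for g :: "nat \<Rightarrow> int"
    using arg_min_if_finite[of ?J g] by (auto simp: not_less)
  show ?thesis
  proof (cases "\<exists>j0\<in>{2..2*N}. \<forall>j\<in>?J. odd_excess Y j0 \<le> odd_excess Y j")
    case True
    then show ?thesis using block_at_interior_min[OF Y(1)] by blast
  next
    case False
    \<comment> \<open>Then the minimum \<open>0\<close> is attained only at the ends, and the path of the complement
      has an interior minimum.\<close>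
    define Z where "Z = {1..2*N} - Y"
    have Z: "Z \<subseteq> {1..2*N}" "{1..2*N} - Z = Y" using Y(1) by (auto simp: Z_def)
    have Y1: "odd_excess Y 1 = 0"
      using Y(1) odd_excess_Suc[of Y 0] by auto
    have boundary: "odd_excess Z 1 = 0" "odd_excess Z (Suc (2*N)) = 0"
      using Y1 balanced odd_excess_complement[OF Y(1), of 1] odd_excess_complement[OF Y(1), of "Suc (2*N)"]
      by (simp_all add: Z_def)
    obtain j1 where j1: "j1 \<in> ?J" "\<forall>j\<in>?J. odd_excess Y j1 \<le> odd_excess Y j"
      using minimizer by blast
    have "j1 = 1 \<or> j1 = Suc (2*N)" using False j1 by force
    then have nonneg: "0 \<le> odd_excess Y j" if "j \<in> ?J" for j
      using j1 that Y1 balanced by force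
    have "1 \<le> N" using Y by (auto simp: subset_iff)
    then have "odd_excess Y 2 \<noteq> 0" using False nonneg by force
    then have "odd_excess Z 2 \<le> 0"
      using nonneg[of 2] \<open>1 \<le> N\<close> odd_excess_complement[OF Y(1), of 2] by (simp add: Z_def)
    obtain j2 where j2: "j2 \<in> ?J" "\<forall>j\<in>?J. odd_excess Z j2 \<le> odd_excess Z j"
      using minimizer by blast
    have "\<exists>j0\<in>{2..2*N}. \<forall>j\<in>?J. odd_excess Z j0 \<le> odd_excess Z j"
    proof (cases "j2 \<in> {2..2*N}")
      case True
      then show ?thesis using j2 by blast
    next
      case False
      then have "j2 = 1 \<or> j2 = Suc (2*N)" using j2(1) by auto
      then have "odd_excess Z j2 = 0" using boundary by auto
      then show ?thesis using j2 \<open>odd_excess Z 2 \<le> 0\<close> \<open>1 \<le> N\<close> by force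
    qed
    then obtain k where "k \<in> {1..<2*N}"
      "k \<notin> Z \<and> Suc k \<notin> Z \<and> excess_extremal_at N Z k \<or> k \<in> Z \<and> Suc k \<in> Z \<and> excess_extremal_at N Y k"
      using block_at_interior_min[OF Z(1)] unfolding Z(2) by blast
    then show ?thesis by (auto simp: Z_def)
  qed
qed

section \<open>Exchange across a block\<close>

definition rotated_rank :: "nat \<Rightarrow> nat \<Rightarrow> nat \<Rightarrow> nat" where
  "rotated_rank N k i = (if k < i then i else i + 2*N)"

lemma rotated_odd_excess:
  assumes Y: "Y \<subseteq> {1..2*N}" and balanced: "odd_excess Y (Suc (2*N)) = 0"
    and k: "1 \<le> k" "k < 2*N" "k \<notin> Y"
  shows "\<exists>j\<in>{1..Suc (2*N)}.
    (\<Sum>i\<in>{i\<in>Y. rotated_rank N k i \<le> c}. parity_sign i) = odd_excess Y j - odd_excess Y k"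
proof -
  have after_k: "odd_excess Y (Suc k) = odd_excess Y k"
    using k by (simp add: odd_excess_Suc)
  consider "c \<le> k" | "k < c" "c \<le> 2*N" | "2*N < c" by linarith
  then show ?thesis
  proof cases
    case 1
    then have none: "{i\<in>Y. rotated_rank N k i \<le> c} = {}"
      using Y k by (auto simp: rotated_rank_def)
    show ?thesis using k by (intro bexI[of _ k]) (unfold none, simp_all)
  next
    case 2
    then have "{i\<in>Y. rotated_rank N k i \<le> c} = {i\<in>Y. Suc k \<le> i \<and> i < Suc c}"
      using Y by (auto simp: rotated_rank_def)
    then show ?thesis
      using 2 odd_excess_diff[of "Suc k" "Suc c" Y] after_k by (intro bexI[of _ "Suc c"]) auto
  next
    case 3
    define j where "j = Suc (min k (c - 2*N))"
    have split: "{i\<in>Y. rotated_rank N k i \<le> c} =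
        {i\<in>Y. Suc k \<le> i \<and> i < Suc (2*N)} \<union> {i\<in>Y. 0 \<le> i \<and> i < j}"
      using Y 3 by (auto simp: j_def rotated_rank_def)
    have "(\<Sum>i\<in>{i\<in>Y. rotated_rank N k i \<le> c}. parity_sign i) =
        (\<Sum>i\<in>{i\<in>Y. Suc k \<le> i \<and> i < Suc (2*N)}. parity_sign i) + (\<Sum>i\<in>{i\<in>Y. 0 \<le> i \<and> i < j}. parity_sign i)"
      unfolding split by (rule sum.union_disjoint) (auto simp: j_def intro: finite_subset[OF _ finite_Collect_mem_less_nat])
    also have "\<dots> = (odd_excess Y (Suc (2*N)) - odd_excess Y (Suc k)) + (odd_excess Y j - odd_excess Y 0)"
      using k by (simp only: odd_excess_diff)
    finally show ?thesis
      using balanced after_k k by (intro bexI[of _ j]) (auto simp: j_def)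
  qed
qed

lemma rotated_rank_config:
  assumes mono: "mono_on {1..2*N} x" and k: "1 \<le> k" "k < 2*N"
    and uv: "u \<in> {1..2*N} - {k, Suc k}" "v \<in> {1..2*N} - {k, Suc k}"
    and less: "rotated_rank N k u < rotated_rank N k v"
  shows "x (Suc k) \<le> x u \<and> x u \<le> x v \<or> x v \<le> x k \<and> x (Suc k) \<le> x u \<or> x u \<le> x v \<and> x v \<le> x k"
proof -
  have mem: "k \<in> {1..2*N}" "Suc k \<in> {1..2*N}" "u \<in> {1..2*N}" "v \<in> {1..2*N}"
    using uv k by auto
  note mo = mono_onD[OF mono]
  have "Suc k < u \<and> u \<le> v \<or> v \<le> k \<and> Suc k < u \<or> u \<le> v \<and> v \<le> k"
    using less uv by (auto simp: rotated_rank_def split: if_splits)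
  then show ?thesis
  proof (elim disjE conjE)
    assume "Suc k < u" "u \<le> v"
    then show ?thesis using mo[OF mem(2,3)] mo[OF mem(3,4)] by simp
  next
    assume "v \<le> k" "Suc k < u"
    then show ?thesis using mo[OF mem(4,1)] mo[OF mem(2,3)] by simp
  next
    assume "u \<le> v" "v \<le> k"
    then show ?thesis using mo[OF mem(3,4)] mo[OF mem(4,1)] by simp
  qed
qed

lemma block_exchange:
  fixes L F :: "nat set" and k N :: nat
  assumes wo: "well_ordering I w" and xI: "\<forall>i\<in>{1..2*N}. x i \<in> I" and mono: "mono_on {1..2*N} x"
    and k: "1 \<le> k" "k < 2*N"
    and LF: "L \<union> F \<subseteq> {1..2*N} - {k, Suc k}" "L \<inter> F = {}" "card L = card F"
    and ballot: "\<And>c. card {v\<in>F. rotated_rank N k v \<le> c} \<le> card {u\<in>L. rotated_rank N k u \<le> c}"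
  shows "join_cost w x k L (Suc k) F \<le> join_cost w x k F (Suc k) L"
    and "strictly_well_ordering I w \<Longrightarrow> x k \<noteq> x (Suc k) \<Longrightarrow>
      join_cost w x k L (Suc k) F = join_cost w x k F (Suc k) L \<Longrightarrow> join_cost w x k F (Suc k) L \<noteq> \<infinity> \<Longrightarrow>
      image_mset x (mset_set L) = image_mset x (mset_set F)"
proof -
  have fin: "finite L" "finite F"
    using LF(1) by (auto intro: finite_subset)
  have "inj_on (rotated_rank N k) {1..2*N}"
    by (auto simp: inj_on_def rotated_rank_def)
  then have "inj_on (rotated_rank N k) (L \<union> F)"
    by (rule inj_on_subset) (use LF(1) in auto)
  then obtain \<phi> where \<phi>: "inj_on \<phi> F" "\<phi> ` F \<subseteq> L" "\<And>v. v \<in> F \<Longrightarrow> rotated_rank N k (\<phi> v) < rotated_rank N k v"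
    using ballot_matching[OF fin(2,1) _ LF(2) ballot] by blast
  have bij: "bij_betw \<phi> F L"
    using \<phi>(1,2) fin LF(3) by (simp add: bij_betw_def card_image card_subset_eq)
  have xk: "x k \<in> I" "x (Suc k) \<in> I" "x k \<le> x (Suc k)"
    using xI k by (auto intro: mono_onD[OF mono])
  have pair: "x (\<phi> v) \<in> I" "x v \<in> I"
    "x (Suc k) \<le> x (\<phi> v) \<and> x (\<phi> v) \<le> x v \<or> x v \<le> x k \<and> x (Suc k) \<le> x (\<phi> v) \<or>
     x (\<phi> v) \<le> x v \<and> x v \<le> x k" if "v \<in> F" for v
  proof -
    have "\<phi> v \<in> {1..2*N} - {k, Suc k}" "v \<in> {1..2*N} - {k, Suc k}"
      using that \<phi>(2) LF(1) by blast+
    then show "x (\<phi> v) \<in> I" "x v \<in> I"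
      "x (Suc k) \<le> x (\<phi> v) \<and> x (\<phi> v) \<le> x v \<or> x v \<le> x k \<and> x (Suc k) \<le> x (\<phi> v) \<or>
       x (\<phi> v) \<le> x v \<and> x v \<le> x k"
      using xI rotated_rank_config[OF mono k _ _ \<phi>(3)[OF that]] by auto
  qed
  define f where "f i = w (x k) (x i)" for i
  define g where "g i = w (x (Suc k)) (x i)" for i
  have not_MInfty: "\<forall>i\<in>L \<union> F. f i \<noteq> -\<infinity> \<and> g i \<noteq> -\<infinity>"
    using LF(1) xI xk well_ordering_not_MInfty[OF wo] by (auto simp: f_def g_def)
  have le: "\<forall>v\<in>F. f (\<phi> v) + g v \<le> f v + g (\<phi> v)"
    unfolding f_def g_def using well_ordering_exchange[OF wo xk(1,2) pair(1,2) xk(3) pair(3)] by blast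
  note exchange = matched_exchange[OF bij fin(2) le not_MInfty]
  show "join_cost w x k L (Suc k) F \<le> join_cost w x k F (Suc k) L"
    unfolding join_cost_def f_def[symmetric] g_def[symmetric] by (rule exchange(1))
  assume swo: "strictly_well_ordering I w" and "x k \<noteq> x (Suc k)"
    and eq: "join_cost w x k L (Suc k) F = join_cost w x k F (Suc k) L"
    and finite: "join_cost w x k F (Suc k) L \<noteq> \<infinity>"
  show "image_mset x (mset_set L) = image_mset x (mset_set F)"
  proof (rule image_mset_mset_set_bij_betw[OF bij], rule ccontr)
    fix v assume "v \<in> F" "x (\<phi> v) \<noteq> x v"
    moreover from exchange(2)[OF _ _ \<open>v \<in> F\<close>] eq finite
    have "f (\<phi> v) + g v = f v + g (\<phi> v)" "f v + g (\<phi> v) \<noteq> \<infinity>"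
      unfolding join_cost_def f_def[symmetric] g_def[symmetric] by auto
    ultimately show False
      using strictly_well_ordering_exchange[OF swo xk(1,2) pair(1,2)[OF \<open>v \<in> F\<close>] xk(3) pair(3)[OF \<open>v \<in> F\<close>] \<open>x k \<noteq> x (Suc k)\<close>]
      unfolding f_def g_def by blast
  qed
qed

lemma cross_inequality:
  fixes D :: "nat set" and k N :: nat
  assumes wo: "well_ordering I w" and xI: "\<forall>i\<in>{1..2*N}. x i \<in> I" and mono: "mono_on {1..2*N} x"
    and D: "D \<subseteq> {1..2*N}" "odd_excess D (Suc (2*N)) = 0"
    and k: "1 \<le> k" "k < 2*N" "k \<notin> D" "Suc k \<notin> D" and extremal: "excess_extremal_at N D k"
  defines "ov \<equiv> if odd k then k else Suc k" and "ev \<equiv> if odd k then Suc k else k"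
    and "U \<equiv> {i\<in>D. odd i}" and "V \<equiv> {i\<in>D. even i}"
  shows "join_cost w x ov U ev V \<le> join_cost w x ov V ev U"
    and "strictly_well_ordering I w \<Longrightarrow> x k \<noteq> x (Suc k) \<Longrightarrow>
      join_cost w x ov U ev V = join_cost w x ov V ev U \<Longrightarrow> join_cost w x ov V ev U \<noteq> \<infinity> \<Longrightarrow>
      image_mset x (mset_set U) = image_mset x (mset_set V)"
proof -
  have UV: "U \<union> V \<subseteq> {1..2*N} - {k, Suc k}" "U \<inter> V = {}" "V \<union> U \<subseteq> {1..2*N} - {k, Suc k}" "V \<inter> U = {}"
    using D(1) k(3,4) by (auto simp: U_def V_def)
  have card: "card U = card V"
    using odd_excess_total[OF D(1)] D(2) by (simp add: U_def V_def)
  have excess: "\<exists>j\<in>{1..Suc (2*N)}. int (card {u\<in>U. rotated_rank N k u \<le> c}) -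
      int (card {v\<in>V. rotated_rank N k v \<le> c}) = odd_excess D j - odd_excess D k" for c
  proof -
    have "{i\<in>{i\<in>D. rotated_rank N k i \<le> c}. odd i} = {u\<in>U. rotated_rank N k u \<le> c}"
      "{i\<in>{i\<in>D. rotated_rank N k i \<le> c}. even i} = {v\<in>V. rotated_rank N k v \<le> c}"
      by (auto simp: U_def V_def)
    moreover have "finite {i\<in>D. rotated_rank N k i \<le> c}"
      using D(1) by (auto intro: finite_subset)
    ultimately show ?thesis
      using rotated_odd_excess[OF D k(1,2,3), of c] sum_parity_sign by simp
  qed
  have "join_cost w x ov U ev V \<le> join_cost w x ov V ev U \<and>
    (strictly_well_ordering I w \<longrightarrow> x k \<noteq> x (Suc k) \<longrightarrow>
      join_cost w x ov U ev V = join_cost w x ov V ev U \<longrightarrow> join_cost w x ov V ev U \<noteq> \<infinity> \<longrightarrow>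
      image_mset x (mset_set U) = image_mset x (mset_set V))"
  proof (cases "odd k")
    case True
    have "card {v\<in>V. rotated_rank N k v \<le> c} \<le> card {u\<in>U. rotated_rank N k u \<le> c}" for c
      using excess[of c] extremal True by (force simp: excess_extremal_at_def)
    from block_exchange[OF wo xI mono k(1,2) UV(1,2) card this]
    show ?thesis using True by (simp add: ov_def ev_def)
  next
    case False
    have "card {u\<in>U. rotated_rank N k u \<le> c} \<le> card {v\<in>V. rotated_rank N k v \<le> c}" for c
      using excess[of c] extremal False by (force simp: excess_extremal_at_def)
    from block_exchange[OF wo xI mono k(1,2) UV(3,4) card[symmetric] this]
    show ?thesis using False by (auto simp: join_cost_def ov_def ev_def ac_simps)
  qed
  then show "join_cost w x ov U ev V \<le> join_cost w x ov V ev U"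
    and "strictly_well_ordering I w \<Longrightarrow> x k \<noteq> x (Suc k) \<Longrightarrow>
      join_cost w x ov U ev V = join_cost w x ov V ev U \<Longrightarrow> join_cost w x ov V ev U \<noteq> \<infinity> \<Longrightarrow>
      image_mset x (mset_set U) = image_mset x (mset_set V)"
    by blast+
qed

section \<open>Removing a block\<close>

definition skip_block :: "nat \<Rightarrow> nat \<Rightarrow> nat" where
  "skip_block k i = (if i < k then i else i + 2)"

lemma mono_skip_block: "mono (skip_block k)"
  by (auto simp: mono_def skip_block_def)

lemma skip_block_mem: "i \<in> {1..2*N} \<Longrightarrow> skip_block k i \<in> {1..2 * Suc N}"
  by (auto simp: skip_block_def)

lemma mono_on_skip_block:
  assumes "mono_on {1..2 * Suc N} x"
  shows "mono_on {1..2*N} (x \<circ> skip_block k)"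
proof (rule mono_onI)
  fix i j assume "i \<in> {1..2*N}" "j \<in> {1..2*N}" "i \<le> j"
  then show "(x \<circ> skip_block k) i \<le> (x \<circ> skip_block k) j"
    using mono_onD[OF assms skip_block_mem skip_block_mem monoD[OF mono_skip_block]] by simp
qed

lemma bij_betw_skip_block:
  assumes "1 \<le> k" "k \<le> Suc (2*N)"
  shows "bij_betw (skip_block k) {1..2*N} ({1..2 * Suc N} - {k, Suc k})"
proof (rule bij_betw_imageI)
  show "inj_on (skip_block k) {1..2*N}"
    by (auto simp: inj_on_def skip_block_def split: if_splits)
  show "skip_block k ` {1..2*N} = {1..2 * Suc N} - {k, Suc k}"
  proof
    show "skip_block k ` {1..2*N} \<subseteq> {1..2 * Suc N} - {k, Suc k}"
      using assms by (auto simp: skip_block_def)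
    show "{1..2 * Suc N} - {k, Suc k} \<subseteq> skip_block k ` {1..2*N}"
    proof
      fix i assume i: "i \<in> {1..2 * Suc N} - {k, Suc k}"
      show "i \<in> skip_block k ` {1..2*N}"
      proof (cases "i < k")
        case True
        then show ?thesis using i assms by (intro image_eqI[of _ _ i]) (auto simp: skip_block_def)
      next
        case False
        then show ?thesis using i assms by (intro image_eqI[of _ _ "i - 2"]) (auto simp: skip_block_def)
      qed
    qed
  qed
qed

definition odd_indices :: "nat \<Rightarrow> nat set" where
  "odd_indices N = {i\<in>{1..2*N}. odd i}"

lemma odd_indices_eq: "odd_indices N = (\<lambda>k. 2*k - 1) ` {1..N}"
proof -
  have "i \<in> odd_indices N \<longleftrightarrow> i \<in> (\<lambda>k. 2*k - 1) ` {1..N}" for i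
  proof
    assume "i \<in> odd_indices N"
    then show "i \<in> (\<lambda>k. 2*k - 1) ` {1..N}"
      by (intro image_eqI[of _ _ "(i + 1) div 2"]) (auto simp: odd_indices_def elim!: oddE)
  qed (auto simp: odd_indices_def)
  then show ?thesis by blast
qed

lemma even_indices_eq: "{1..2*N} - odd_indices N = (\<lambda>k. 2*k) ` {1..N}"
proof -
  have "i \<in> {1..2*N} - odd_indices N \<longleftrightarrow> i \<in> (\<lambda>k. 2*k) ` {1..N}" for i
  proof
    assume "i \<in> {1..2*N} - odd_indices N"
    then show "i \<in> (\<lambda>k. 2*k) ` {1..N}"
      by (intro image_eqI[of _ _ "i div 2"]) (auto simp: odd_indices_def elim!: evenE)
  qed (auto simp: odd_indices_def)
  then show ?thesis by blast
qed

lemma card_odd_indices: "card (odd_indices N) = N"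
  unfolding odd_indices_eq by (subst card_image) (auto simp: inj_on_def)

lemma skip_block_image_preimage:
  assumes "1 \<le> k" "k \<le> Suc (2*N)" "A \<subseteq> {1..2 * Suc N}"
  shows "skip_block k ` {i\<in>{1..2*N}. skip_block k i \<in> A} = A - {k, Suc k}"
proof -
  have "skip_block k ` {i\<in>{1..2*N}. skip_block k i \<in> A} = skip_block k ` {1..2*N} \<inter> A"
    by auto
  also have "\<dots> = A - {k, Suc k}"
    using bij_betw_imp_surj_on[OF bij_betw_skip_block[OF assms(1,2)]] assms(3) by auto
  finally show ?thesis .
qed

lemma odd_indices_skip_block:
  "{i\<in>{1..2*N}. skip_block k i \<in> odd_indices (Suc N)} = odd_indices N"
  "{i\<in>{1..2*N}. skip_block k i \<in> {1..2 * Suc N} - odd_indices (Suc N)} = {1..2*N} - odd_indices N"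
  by (auto simp: odd_indices_def skip_block_def)

lemma split_cost_remove_block:
  fixes N k :: nat
  defines "S \<equiv> {1..2 * Suc N}"
  assumes wo: "well_ordering I w" and xI: "\<forall>i\<in>S. x i \<in> I"
    and k: "1 \<le> k" "k \<le> Suc (2*N)" and A: "A \<subseteq> S" "a \<in> A" "b \<in> S - A" "{a, b} = {k, Suc k}"
  defines "A' \<equiv> {i\<in>{1..2*N}. skip_block k i \<in> A}"
    and "c \<equiv> join_cost w x a (A - {a}) b (S - A - {b})"
  shows "split_cost w x S A = split_cost w (x \<circ> skip_block k) {1..2*N} A' + (c + c)"
    and "image_mset x (mset_set A) = add_mset (x a) (image_mset (x \<circ> skip_block k) (mset_set A'))"
proof -
  have bij: "bij_betw (skip_block k) {1..2*N} (S - {a, b})"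
    using bij_betw_skip_block[OF k] A(4) by (simp add: S_def)
  have A': "skip_block k ` A' = A - {a}"
    using skip_block_image_preimage[OF k, of A] A unfolding A'_def S_def by auto
  have "A' \<subseteq> {1..2*N}" by (auto simp: A'_def)
  have "split_cost w x S A = split_cost w x (S - {a, b}) (A - {a}) + (c + c)"
    unfolding c_def using A well_ordering_symmetric[OF wo] xI
    by (intro split_cost_remove_pair) (auto simp: S_def)
  also have "split_cost w x (S - {a, b}) (A - {a}) = split_cost w (x \<circ> skip_block k) {1..2*N} A'"
    using split_cost_image[OF bij_betw_imp_inj_on[OF bij] \<open>A' \<subseteq> {1..2*N}\<close>, of w x]
    unfolding A' bij_betw_imp_surj_on[OF bij] .
  finally show "split_cost w x S A = split_cost w (x \<circ> skip_block k) {1..2*N} A' + (c + c)" .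
  have "finite A" using A(1) by (auto simp: S_def intro: finite_subset)
  have "inj_on (skip_block k) A'"
    using bij_betw_imp_inj_on[OF bij] \<open>A' \<subseteq> {1..2*N}\<close> by (rule inj_on_subset)
  then have "image_mset (x \<circ> skip_block k) (mset_set A') = image_mset x (mset_set (A - {a}))"
    by (simp add: image_mset_mset_set A' flip: multiset.map_comp)
  then show "image_mset x (mset_set A) = add_mset (x a) (image_mset (x \<circ> skip_block k) (mset_set A'))"
    using \<open>finite A\<close> A(2) by (simp add: mset_set.remove)
qed

lemma alternating_block_decomposition:
  fixes N k :: nat and A :: "nat set" and x :: "nat \<Rightarrow> real" and w :: "real \<Rightarrow> real \<Rightarrow> ereal"
  defines "S \<equiv> {1..2 * Suc N}" and "Od \<equiv> odd_indices (Suc N)"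
    and "ov \<equiv> if odd k then k else Suc k" and "ev \<equiv> if odd k then Suc k else k"
  defines "x' \<equiv> x \<circ> skip_block k" and "A' \<equiv> {i\<in>{1..2*N}. skip_block k i \<in> A}"
  assumes wo: "well_ordering I w" and xI: "\<forall>i\<in>S. x i \<in> I" and A: "A \<subseteq> S"
    and k: "1 \<le> k" "k < 2 * Suc N" "k \<in> A \<longleftrightarrow> k \<in> Od" "Suc k \<in> A \<longleftrightarrow> Suc k \<in> Od"
  obtains R where "split_cost w x' {1..2*N} (odd_indices N) \<noteq> -\<infinity>" "R \<noteq> -\<infinity>"
      "join_cost w x ov (Od - A) ev (A - Od) \<noteq> -\<infinity>"
    and "split_cost w x S A = split_cost w x' {1..2*N} A' +
      ((R + join_cost w x ov (A - Od) ev (Od - A)) + (R + join_cost w x ov (A - Od) ev (Od - A)))"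
    and "split_cost w x S Od = split_cost w x' {1..2*N} (odd_indices N) +
      ((R + join_cost w x ov (Od - A) ev (A - Od)) + (R + join_cost w x ov (Od - A) ev (A - Od)))"
    and "image_mset x (mset_set A) = add_mset (x ov) (image_mset x' (mset_set A'))"
    and "image_mset x (mset_set Od) = add_mset (x ov) (image_mset x' (mset_set (odd_indices N)))"
    and "image_mset x (mset_set (S - Od)) =
      add_mset (x ev) (image_mset x' (mset_set ({1..2*N} - odd_indices N)))"
proof -
  have pair: "{ov, ev} = {k, Suc k}" "{ev, ov} = {k, Suc k}"
    by (auto simp: ov_def ev_def)
  have kS: "k \<in> S" "Suc k \<in> S" "k \<le> Suc (2*N)"
    using k by (auto simp: S_def)
  have Od: "Od \<subseteq> S" "ov \<in> Od" "ev \<in> S - Od"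
    using kS by (auto simp: Od_def S_def odd_indices_def ov_def ev_def)
  then have ov: "ov \<in> A" and ev: "ev \<in> S - A"
    using pair k(3,4) by auto
  define Sr where "Sr = S - {ov, ev}"
  define R where "R = join_cost w x ov ((Od - {ov}) \<inter> (A - {ov})) ev (Sr - ((Od - {ov}) \<union> (A - {ov})))"
  have sets: "S - A - {ev} = Sr - (A - {ov})" "S - Od - {ev} = Sr - (Od - {ov})"
    "(Od - {ov}) - (A - {ov}) = Od - A" "(A - {ov}) - (Od - {ov}) = A - Od"
    "A - {ov} \<subseteq> Sr" "Od - {ov} \<subseteq> Sr" "finite Sr"
    using A Od ov ev by (auto simp: Sr_def S_def)
  note regroup = join_cost_regroup[OF sets(7), of "A - {ov}" "Od - {ov}"] join_cost_regroup[OF sets(7,6,5)]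
  note remove = split_cost_remove_block[where N=N and k=k, folded S_def, OF wo xI k(1) kS(3)]
  show ?thesis
  proof (rule that)
    have "odd_indices N \<subseteq> {1..2*N}" "\<forall>i\<in>{1..2*N}. x' i \<in> I"
      using xI skip_block_mem by (auto simp: odd_indices_def x'_def S_def)
    then show "split_cost w x' {1..2*N} (odd_indices N) \<noteq> -\<infinity>"
      using split_cost_not_MInfty[OF wo] by blast
    show "R \<noteq> -\<infinity>"
      unfolding R_def using Od ov ev xI by (intro join_cost_not_MInfty[OF wo]) (auto simp: Sr_def)
    show "join_cost w x ov (Od - A) ev (A - Od) \<noteq> -\<infinity>"
      using Od ov ev xI A by (intro join_cost_not_MInfty[OF wo]) auto
    show "split_cost w x S A = split_cost w x' {1..2*N} A' +
        ((R + join_cost w x ov (A - Od) ev (Od - A)) + (R + join_cost w x ov (A - Od) ev (Od - A)))"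
      using remove(1)[OF A ov ev pair(1)] regroup(1) sets(5,6)
      unfolding sets(1-4) R_def A'_def x'_def by (simp add: Int_commute Un_commute)
    show "split_cost w x S Od = split_cost w x' {1..2*N} (odd_indices N) +
        ((R + join_cost w x ov (Od - A) ev (A - Od)) + (R + join_cost w x ov (Od - A) ev (A - Od)))"
      using remove(1)[OF Od pair(1)] regroup(2)
      unfolding sets(1-4) R_def odd_indices_skip_block(1)[of N k, folded Od_def] x'_def by simp
    show "image_mset x (mset_set A) = add_mset (x ov) (image_mset x' (mset_set A'))"
      using remove(2)[OF A ov ev pair(1)] unfolding A'_def x'_def .
    show "image_mset x (mset_set Od) = add_mset (x ov) (image_mset x' (mset_set (odd_indices N)))"
      using remove(2)[OF Od pair(1)] unfolding odd_indices_skip_block(1)[of N k, folded Od_def] x'_def .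
    have "S - Od \<subseteq> S" "ov \<in> S - (S - Od)" using Od by auto
    from remove(2)[OF this(1) Od(3) this(2) pair(2)]
    show "image_mset x (mset_set (S - Od)) =
        add_mset (x ev) (image_mset x' (mset_set ({1..2*N} - odd_indices N)))"
      unfolding odd_indices_skip_block(2)[of N k, folded S_def Od_def] x'_def .
  qed
qed

definition alternating_optimal ::
    "real set \<Rightarrow> (real \<Rightarrow> real \<Rightarrow> ereal) \<Rightarrow> nat \<Rightarrow> (nat \<Rightarrow> real) \<Rightarrow> nat set \<Rightarrow> bool" where
  "alternating_optimal I w N x A \<longleftrightarrow>
     split_cost w x {1..2*N} (odd_indices N) \<le> split_cost w x {1..2*N} A \<and>
     (strictly_well_ordering I w \<longrightarrow>
      split_cost w x {1..2*N} A = split_cost w x {1..2*N} (odd_indices N) \<longrightarrow>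
      split_cost w x {1..2*N} A \<noteq> \<infinity> \<longrightarrow>
      image_mset x (mset_set A) = image_mset x (mset_set (odd_indices N)) \<or>
      image_mset x (mset_set A) = image_mset x (mset_set ({1..2*N} - odd_indices N)))"

lemma alternating_optimal_complement:
  assumes "A \<subseteq> {1..2*N}" and "alternating_optimal I w N x ({1..2*N} - A)"
  shows "alternating_optimal I w N x A"
proof -
  let ?S = "{1..2*N}" and ?Od = "odd_indices N"
  have split: "image_mset x (mset_set ?S) = image_mset x (mset_set B) + image_mset x (mset_set (?S - B))"
    if "B \<subseteq> ?S" for B
    using image_mset_mset_set_Int_Diff[of ?S x B] that by (simp add: Int_absorb1)
  have "?Od \<subseteq> ?S" by (auto simp: odd_indices_def)
  have "image_mset x (mset_set A) = image_mset x (mset_set (?S - ?Od))"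
    if "image_mset x (mset_set (?S - A)) = image_mset x (mset_set ?Od)"
    using split[OF assms(1)] split[OF \<open>?Od \<subseteq> ?S\<close>] that by (simp add: add.commute)
  moreover have "image_mset x (mset_set A) = image_mset x (mset_set ?Od)"
    if "image_mset x (mset_set (?S - A)) = image_mset x (mset_set (?S - ?Od))"
    using split[OF assms(1)] split[OF \<open>?Od \<subseteq> ?S\<close>] that by simp
  ultimately show ?thesis
    using assms(2) split_cost_Diff[OF finite_atLeastAtMost assms(1)]
    unfolding alternating_optimal_def by metis
qed

lemma odd_excess_sym_diff_odd_indices:
  assumes "A \<subseteq> {1..2*N}" "card A = N"
  shows "odd_excess ((A - odd_indices N) \<union> (odd_indices N - A)) (Suc (2*N)) = 0"
proof -
  let ?D = "(A - odd_indices N) \<union> (odd_indices N - A)"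
  have "?D \<subseteq> {1..2*N}" "{i\<in>?D. odd i} = odd_indices N - A" "{i\<in>?D. even i} = A - odd_indices N"
    using assms(1) by (auto simp: odd_indices_def)
  moreover have "card (odd_indices N - A) = card (A - odd_indices N)"
    using assms card_odd_indices[of N] finite_subset[OF assms(1)]
    by (simp add: card_Diff_subset_Int Int_commute)
  ultimately show ?thesis
    using odd_excess_total by simp
qed

lemma card_skip_block_preimage:
  assumes k: "1 \<le> k" "k < 2 * Suc N" and A: "A \<subseteq> {1..2 * Suc N}" "card A = Suc N"
    and one: "k \<in> A \<longleftrightarrow> Suc k \<notin> A"
  shows "card {i\<in>{1..2*N}. skip_block k i \<in> A} = N"
proof -
  let ?A' = "{i\<in>{1..2*N}. skip_block k i \<in> A}"
  have "inj_on (skip_block k) {1..2*N}"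
    using bij_betw_imp_inj_on[OF bij_betw_skip_block[of k N]] k by simp
  then have "inj_on (skip_block k) ?A'"
    by (rule inj_on_subset) auto
  then have "card ?A' = card (A - {k, Suc k})"
    using skip_block_image_preimage[of k N A] k A(1) by (simp flip: card_image)
  also have "\<dots> = N"
    using A one finite_subset[OF A(1)] by (cases "k \<in> A") (auto simp: card_Diff_subset)
  finally show ?thesis .
qed

lemma alternating_optimal_at_block:
  fixes N k :: nat and A :: "nat set" and x :: "nat \<Rightarrow> real"
  defines "S \<equiv> {1..2 * Suc N}" and "Od \<equiv> odd_indices (Suc N)"
  defines "D \<equiv> (A - Od) \<union> (Od - A)"
  assumes wo: "well_ordering I w" and xI: "\<forall>i\<in>S. x i \<in> I" and mono: "mono_on S x"
    and A: "A \<subseteq> S" "card A = Suc N"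
    and k: "1 \<le> k" "k < 2 * Suc N" "k \<notin> D" "Suc k \<notin> D" and extremal: "excess_extremal_at (Suc N) D k"
    and IH: "alternating_optimal I w N (x \<circ> skip_block k) {i\<in>{1..2*N}. skip_block k i \<in> A}"
  shows "alternating_optimal I w (Suc N) x A"
proof -
  define ov where "ov = (if odd k then k else Suc k)"
  define ev where "ev = (if odd k then Suc k else k)"
  define X where "X = join_cost w x ov (Od - A) ev (A - Od)"
  define X' where "X' = join_cost w x ov (A - Od) ev (Od - A)"
  define x' where "x' = x \<circ> skip_block k"
  define A' where "A' = {i\<in>{1..2*N}. skip_block k i \<in> A}"
  define T where "T = {1..2*N}"
  have agree: "k \<in> A \<longleftrightarrow> k \<in> Od" "Suc k \<in> A \<longleftrightarrow> Suc k \<in> Od"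
    using k(3,4) by (auto simp: D_def)
  obtain R where not_MInfty: "split_cost w x' T (odd_indices N) \<noteq> -\<infinity>" "R \<noteq> -\<infinity>" "X \<noteq> -\<infinity>"
    and costA: "split_cost w x S A = split_cost w x' T A' + ((R + X') + (R + X'))"
    and costOd: "split_cost w x S Od = split_cost w x' T (odd_indices N) + ((R + X) + (R + X))"
    and msetA: "image_mset x (mset_set A) = add_mset (x ov) (image_mset x' (mset_set A'))"
    and msetOd: "image_mset x (mset_set Od) = add_mset (x ov) (image_mset x' (mset_set (odd_indices N)))"
    and msetEv: "image_mset x (mset_set (S - Od)) = add_mset (x ev) (image_mset x' (mset_set (T - odd_indices N)))"
    using alternating_block_decomposition[OF wo xI[unfolded S_def] A(1)[unfolded S_def] k(1,2) agree[unfolded Od_def]]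
    unfolding S_def Od_def ov_def ev_def X_def X'_def x'_def A'_def T_def by blast
  have D: "D \<subseteq> {1..2 * Suc N}" "odd_excess D (Suc (2 * Suc N)) = 0"
    using A odd_excess_sym_diff_odd_indices[of A "Suc N"]
    by (auto simp: D_def S_def Od_def odd_indices_def)
  have UV: "{i\<in>D. odd i} = Od - A" "{i\<in>D. even i} = A - Od"
    using A(1) by (auto simp: D_def S_def Od_def odd_indices_def)
  note cross = cross_inequality[OF wo xI[unfolded S_def] mono[unfolded S_def] D k(1,2,3,4) extremal,
      folded ov_def ev_def, unfolded UV, folded X_def X'_def]
  have IH_le: "split_cost w x' T (odd_indices N) \<le> split_cost w x' T A'"
    using IH unfolding alternating_optimal_def x'_def A'_def T_def by blast
  have "(R + X) + (R + X) \<le> (R + X') + (R + X')"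
    using cross(1) by (intro add_mono) auto
  with IH_le have "split_cost w x S Od \<le> split_cost w x S A"
    unfolding costA costOd by (rule add_mono)
  moreover have "image_mset x (mset_set A) = image_mset x (mset_set Od) \<or>
      image_mset x (mset_set A) = image_mset x (mset_set (S - Od))"
    if swo: "strictly_well_ordering I w" and eq: "split_cost w x S A = split_cost w x S Od"
      and finite: "split_cost w x S A \<noteq> \<infinity>"
  proof -
    have "split_cost w x' T (odd_indices N) + ((R + X) + (R + X)) =
        split_cost w x' T A' + ((R + X') + (R + X'))"
      using eq unfolding costA costOd ..
    moreover have "split_cost w x' T A' + ((R + X') + (R + X')) \<noteq> \<infinity>"
      using finite unfolding costA .
    ultimately have tight: "split_cost w x' T (odd_indices N) = split_cost w x' T A'" "X = X'" "X' \<noteq> \<infinity>"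
      using ereal_doubled_cancel[OF IH_le cross(1) _ _ not_MInfty] by blast+
    have "split_cost w x' T A' \<noteq> \<infinity>"
      using finite unfolding costA by simp
    show ?thesis
    proof (cases "x k = x (Suc k)")
      case False
      then have "image_mset x (mset_set (Od - A)) = image_mset x (mset_set (A - Od))"
        using cross(2) swo tight(2,3) by blast
      moreover have "finite A"
        using A(1) by (rule finite_subset) (simp add: S_def)
      moreover have "finite Od"
        by (simp add: Od_def odd_indices_def)
      ultimately have "image_mset x (mset_set A) = image_mset x (mset_set Od)"
        using image_mset_mset_set_eq_if_Diff_eq by metis
      then show ?thesis ..
    next
      case True
      then have "x ov = x ev" by (simp add: ov_def ev_def)
      have "image_mset x' (mset_set A') = image_mset x' (mset_set (odd_indices N)) \<or>
          image_mset x' (mset_set A') = image_mset x' (mset_set (T - odd_indices N))"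
        using IH swo tight(1) \<open>split_cost w x' T A' \<noteq> \<infinity>\<close>
        unfolding alternating_optimal_def x'_def A'_def T_def by auto
      then show ?thesis
        using msetA msetOd msetEv \<open>x ov = x ev\<close> by auto
    qed
  qed
  ultimately show ?thesis
    unfolding alternating_optimal_def S_def Od_def by blast
qed

lemma alternating_split_optimal:
  assumes wo: "well_ordering I w"
  shows "\<forall>i\<in>{1..2*N}. x i \<in> I \<Longrightarrow> mono_on {1..2*N} x \<Longrightarrow> A \<subseteq> {1..2*N} \<Longrightarrow> card A = N \<Longrightarrow>
    alternating_optimal I w N x A"
proof (induction N arbitrary: x A)
  case 0
  then show ?case by (simp add: alternating_optimal_def odd_indices_def)
next
  case (Suc N)
  let ?S = "{1..2 * Suc N}" and ?Od = "odd_indices (Suc N)"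
  have at_block: "alternating_optimal I w (Suc N) x B"
    if B: "B \<subseteq> ?S" "card B = Suc N" and k: "1 \<le> k" "k < 2 * Suc N"
      and agree: "k \<notin> (B - ?Od) \<union> (?Od - B)" "Suc k \<notin> (B - ?Od) \<union> (?Od - B)"
      and extremal: "excess_extremal_at (Suc N) ((B - ?Od) \<union> (?Od - B)) k" for B k
  proof (rule alternating_optimal_at_block[OF wo Suc.prems(1,2) B k agree extremal])
    have "k \<in> B \<longleftrightarrow> Suc k \<notin> B"
      using agree k by (auto simp: odd_indices_def)
    then have "card {i\<in>{1..2*N}. skip_block k i \<in> B} = N"
      by (rule card_skip_block_preimage[OF k B])
    then show "alternating_optimal I w N (x \<circ> skip_block k) {i\<in>{1..2*N}. skip_block k i \<in> B}"
      using Suc.prems(1) skip_block_mem by (intro Suc.IH mono_on_skip_block[OF Suc.prems(2)]) auto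
  qed
  show ?case
  proof (cases "A = ?Od")
    case True
    then show ?thesis by (simp add: alternating_optimal_def)
  next
    case False
    let ?D = "(A - ?Od) \<union> (?Od - A)"
    have D: "?D \<subseteq> ?S" "?D \<noteq> {}" "odd_excess ?D (Suc (2 * Suc N)) = 0"
      using Suc.prems(3,4) False odd_excess_sym_diff_odd_indices[of A "Suc N"]
      by (auto simp: odd_indices_def)
    obtain k where k: "1 \<le> k" "k < 2 * Suc N" and
      cases: "k \<notin> ?D \<and> Suc k \<notin> ?D \<and> excess_extremal_at (Suc N) ?D k \<or>
              k \<in> ?D \<and> Suc k \<in> ?D \<and> excess_extremal_at (Suc N) (?S - ?D) k"
      using block_exists[OF D] by auto
    from cases show ?thesis
    proof (elim disjE conjE)
      assume "k \<notin> ?D" "Suc k \<notin> ?D" "excess_extremal_at (Suc N) ?D k"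
      then show ?thesis using at_block[OF Suc.prems(3,4) k] by blast
    next
      assume "k \<in> ?D" "Suc k \<in> ?D" "excess_extremal_at (Suc N) (?S - ?D) k"
      \<comment> \<open>The complement of \<open>A\<close> agrees with the odd indices on the block.\<close>
      moreover have "(?S - A - ?Od) \<union> (?Od - (?S - A)) = ?S - ?D"
        using Suc.prems(3) by (auto simp: odd_indices_def)
      moreover have "card (?S - A) = Suc N"
        using Suc.prems(3,4) by (simp add: card_Diff_subset finite_subset)
      ultimately have "alternating_optimal I w (Suc N) x (?S - A)"
        using at_block[of "?S - A" k] k by auto
      then show ?thesis
        using alternating_optimal_complement[OF Suc.prems(3)] by blast
    qed
  qed
qed

lemma mono_on_atLeastAtMost_SucI:
  fixes f :: "nat \<Rightarrow> 'a::order"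
  assumes "\<And>k. k \<in> {a..<b} \<Longrightarrow> f k \<le> f (Suc k)"
  shows "mono_on {a..b} f"
proof (rule mono_onI)
  fix i j assume ij: "i \<in> {a..b}" "j \<in> {a..b}" "i \<le> j"
  have "f i \<le> f (i + d)" if "i + d \<le> b" for d
    using that
  proof (induction d)
    case (Suc d)
    then have "i + d \<in> {a..<b}" using ij by auto
    with Suc show ?case using assms[of "i + d"] by auto
  qed simp
  then show "f i \<le> f j"
    using ij by (metis atLeastAtMost_iff le_add_diff_inverse)
qed

lemma cn_xsub_split: "cn w (xsub x A) + cn w (xsub x (S - A)) = split_cost w x S A"
  by (simp add: cn_xsub split_cost_def)

lemma image_mset_odd_indices:
  "image_mset (\<lambda>k. x (2*k - 1)) (mset_set {1..n}) = image_mset x (mset_set (odd_indices n))"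
  unfolding odd_indices_eq
  by (subst image_mset_mset_set[symmetric]) (auto simp: inj_on_def multiset.map_comp comp_def)

lemma image_mset_even_indices:
  "image_mset (\<lambda>k. x (2*k)) (mset_set {1..n}) = image_mset x (mset_set ({1..2*n} - odd_indices n))"
  unfolding even_indices_eq
  by (subst image_mset_mset_set[symmetric]) (auto simp: inj_on_def multiset.map_comp comp_def)

lemma alternating_split_minimal:
  assumes wo: "well_ordering I w" and xI: "\<forall>i\<in>{1..2*n}. x i \<in> I" and mono: "mono_on {1..2*n} x"
    and A: "A \<subseteq> {1..2*n}" "card A = n"
  defines "cost \<equiv> split_cost w x {1..2*n}"
  shows "cost (odd_indices n) \<le> cost A"
    and "Min {cost B | B. B \<subseteq> {1..2*n} \<and> card B = n} = cost (odd_indices n)"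
    and "strictly_well_ordering I w \<Longrightarrow> cost A \<noteq> \<infinity> \<Longrightarrow>
      cost A = cost (odd_indices n) \<longleftrightarrow>
      image_mset x (mset_set A) = image_mset x (mset_set (odd_indices n)) \<or>
      image_mset x (mset_set A) = image_mset x (mset_set ({1..2*n} - odd_indices n))"
proof -
  have optimal: "alternating_optimal I w n x B" if "B \<subseteq> {1..2*n}" "card B = n" for B
    using alternating_split_optimal[OF wo xI mono that] .
  then show "cost (odd_indices n) \<le> cost A"
    using A unfolding alternating_optimal_def cost_def by blast
  have Od: "odd_indices n \<subseteq> {1..2*n}" "card (odd_indices n) = n"
    by (auto simp only: card_odd_indices) (auto simp: odd_indices_def)
  show "Min {cost B | B. B \<subseteq> {1..2*n} \<and> card B = n} = cost (odd_indices n)"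
  proof (rule Min_eqI)
    show "finite {cost B | B. B \<subseteq> {1..2*n} \<and> card B = n}"
      by (rule finite_subset[of _ "cost ` Pow {1..2*n}"]) auto
  qed (use Od optimal in \<open>auto simp: alternating_optimal_def cost_def\<close>)
  show "cost A = cost (odd_indices n) \<longleftrightarrow>
      image_mset x (mset_set A) = image_mset x (mset_set (odd_indices n)) \<or>
      image_mset x (mset_set A) = image_mset x (mset_set ({1..2*n} - odd_indices n))"
    if "strictly_well_ordering I w" "cost A \<noteq> \<infinity>"
    using optimal[OF A] that split_cost_cong_mset[OF finite_atLeastAtMost A(1)]
      split_cost_Diff[OF finite_atLeastAtMost Od(1)] Od(1)
    unfolding alternating_optimal_def cost_def by (metis Diff_subset)
qed

theorem proposition3p1:
  fixes I :: "real set" and w :: "real \<Rightarrow> real \<Rightarrow> ereal" and n :: nat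
    and x :: "nat \<Rightarrow> real" and A :: "nat set"
  assumes "is_interval I"
    and "well_ordering I w"
    and "\<forall>k\<in>{1..2*n}. x k \<in> I"
    and "\<forall>k\<in>{1..<2*n}. x k \<le> x (Suc k)"
    and "A \<subseteq> {1..2*n}" and "card A = n"
  shows "(cn w (xsub x ((\<lambda>k. 2*k - 1) ` {1..n})) + cn w (xsub x ((\<lambda>k. 2*k) ` {1..n}))
           \<le> cn w (xsub x A) + cn w (xsub x ({1..2*n} - A))) \<and>
         (strictly_well_ordering I w \<and> cn w (xsub x A) + cn w (xsub x ({1..2*n} - A)) < \<infinity> \<longrightarrow>
         (cn w (xsub x A) + cn w (xsub x ({1..2*n} - A)) =
            Min {cn w (xsub x B) + cn w (xsub x ({1..2*n} - B)) | B. B \<subseteq> {1..2*n} \<and> card B = n}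
          \<longleftrightarrow> image_mset x (mset_set A) = image_mset (\<lambda>k. x (2*k)) (mset_set {1..n})
            \<or> image_mset x (mset_set A) = image_mset (\<lambda>k. x (2*k - 1)) (mset_set {1..n})))"
proof -
  have "mono_on {1..2*n} x"
    using assms(4) by (intro mono_on_atLeastAtMost_SucI) auto
  note minimal = alternating_split_minimal[OF assms(2,3) this assms(5,6)]
  show ?thesis
    unfolding cn_xsub_split image_mset_odd_indices image_mset_even_indices
      odd_indices_eq[symmetric] even_indices_eq[symmetric]
    using minimal by auto
qed

end
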